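(* Let $k\ge 2$, let $n_1,\dots,n_k\ge 3$, and let $t\ge 1$ be an integer with $t\le (n_i-1)(n_{i+1}-1)$ for all $1\le i\le k-1$. Then every graph $H$ in the family $GS_t(K_{n_1},\dots,K_{n_k})$ satisfies $$D(H,x)=\prod_{i=1}^k\big((1+x)^{n_i}-1\big);$$ in particular all graphs in this family have the same domination polynomial.
   Context: All graphs are finite and simple. For a graph $G$, a set $S\subseteq V(G)$ is dominating if every vertex of $V(G)\setminus S$ is adjacent to some vertex of $S$. Let $d(G,i)$ be the number of dominating sets of $G$ of cardinality $i$; the domination polynomial is $D(G,x)=\sum_{i=1}^{|V(G)|} d(G,i)x^i$. The family $GS_t(K_{n_1},\dots,K_{n_k})$: take vertex-disjoint complete graphs $K_{n_1},\dots,K_{n_k}$, where the vertices of $K_{n_i}$ are labelled $w^{(i)}_1,\dots,w^{(i)}_{n_i}$. For each $1\le i\le k-1$, add a set of exactly $t$ edges between $K_{n_i}$ and $K_{n_{i+1}}$, each of the form $w^{(i)}_a w^{(i+1)}_b$ with $1\le a\le n_i-1$ and $1\le b\le n_{i+1}-1$ (so the vertex $w^{(i)}_{n_i}$ of each clique receives no edges outside its clique). No other edges are added. Every graph arising from some choice of these edge sets belongs to $GS_t(K_{n_1},\dots,K_{n_k})$. *)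

theory Defs
  imports "HOL-Computational_Algebra.Polynomial"
begin

type_synonym 'a graph = "'a set \<times> 'a set set"

definition verts :: "'a graph \<Rightarrow> 'a set" where "verts G = fst G"
definition edges :: "'a graph \<Rightarrow> 'a set set" where "edges G = snd G"

definition dominating :: "'a graph \<Rightarrow> 'a set \<Rightarrow> bool" where
  "dominating G S \<longleftrightarrow> S \<subseteq> verts G \<and>
     (\<forall>v \<in> verts G - S. \<exists>u \<in> S. {u, v} \<in> edges G)"

definition dom_count :: "'a graph \<Rightarrow> nat \<Rightarrow> nat" where
  "dom_count G i = card {S. dominating G S \<and> card S = i}"

definition domination_poly :: "'a graph \<Rightarrow> int poly" where
  "domination_poly G = (\<Sum>i = 1..card (verts G). monom (int (dom_count G i)) i)"

text \<open>Cliques are indexed 0..k-1; vertex (i,a) with a < n i is w^(i+1)_(a+1).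
  The vertex (i, n i - 1) receives no edges outside its clique.\<close>
definition gs_graph :: "nat \<Rightarrow> (nat \<Rightarrow> nat) \<Rightarrow> (nat \<Rightarrow> (nat \<times> nat) set) \<Rightarrow> (nat \<times> nat) graph" where
  "gs_graph k n F =
    ({(i, a). i < k \<and> a < n i},
     {{(i, a), (i, b)} | i a b. i < k \<and> a < n i \<and> b < n i \<and> a \<noteq> b} \<union>
     {{(i, a), (Suc i, b)} | i a b. Suc i < k \<and> (a, b) \<in> F i})"

definition in_GS :: "nat \<Rightarrow> nat \<Rightarrow> (nat \<Rightarrow> nat) \<Rightarrow> (nat \<times> nat) graph \<Rightarrow> bool" where
  "in_GS t k n H \<longleftrightarrow> (\<exists>F. (\<forall>i. Suc i < k \<longrightarrow>
       F i \<subseteq> {0..<n i - 1} \<times> {0..<n (Suc i) - 1} \<and> card (F i) = t)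
     \<and> H = gs_graph k n F)"

end

theory Submission
  imports Defs "HOL-Library.FuncSet"
begin

text \<open>The vertex \<open>(i, n i - 1)\<close> has no neighbours outside clique \<open>i\<close>, so a dominating set
  must meet every clique; conversely any set meeting every clique dominates, since the cliques
  cover all vertices. The inter-clique edges, and hence \<open>t\<close>, are therefore irrelevant: the
  dominating sets are exactly the sets choosing a nonempty subset of each clique, whose
  generating function is \<open>\<Prod>i. ((1 + x)^n\<^sub>i - 1)\<close>.\<close>

lemma sum_pow_card_nonempty_subsets:
  fixes x :: "'a :: comm_ring_1"
  assumes "finite A"
  shows "(\<Sum>B\<in>Pow A - {{}}. x ^ card B) = (1 + x) ^ card A - 1"
proof -
  have "(1 + x) ^ card A = (\<Prod>a\<in>A. x + 1)"
    by (simp add: add.commute)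
  also have "\<dots> = (\<Sum>B\<in>Pow A. x ^ card B)"
    using assms by (subst prod_add) auto
  also have "\<dots> = 1 + (\<Sum>B\<in>Pow A - {{}}. x ^ card B)"
    using assms by (subst sum.remove[of _ "{}"]) auto
  finally show ?thesis by simp
qed

lemma sum_pow_card_subsets_meeting_every_fibre:
  fixes x :: "'a :: comm_ring_1"
  assumes "finite I" and "\<And>i. i \<in> I \<Longrightarrow> finite (A i)"
  shows "(\<Sum>S\<in>{S. S \<subseteq> Sigma I A \<and> (\<forall>i\<in>I. \<exists>a. (i, a) \<in> S)}. x ^ card S)
       = (\<Prod>i\<in>I. (1 + x) ^ card (A i) - 1)"
    (is "(\<Sum>S\<in>?D. _) = _")
proof -
  let ?P = "PiE I (\<lambda>i. Pow (A i) - {{}})"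
  have "(\<Prod>i\<in>I. (1 + x) ^ card (A i) - 1) = (\<Prod>i\<in>I. \<Sum>B\<in>Pow (A i) - {{}}. x ^ card B)"
    using assms(2) by (simp add: sum_pow_card_nonempty_subsets)
  also have "\<dots> = (\<Sum>f\<in>?P. \<Prod>i\<in>I. x ^ card (f i))"
    using assms by (intro prod_sum_PiE) auto
  also have "\<dots> = (\<Sum>f\<in>?P. x ^ card (Sigma I f))"
  proof (rule sum.cong[OF refl])
    fix f assume f: "f \<in> ?P"
    have "card (Sigma I f) = (\<Sum>i\<in>I. card (f i))"
      using f assms by (intro card_SigmaI) (auto simp: PiE_def Pi_def intro: finite_subset)
    then show "(\<Prod>i\<in>I. x ^ card (f i)) = x ^ card (Sigma I f)"
      by (simp add: power_sum)
  qed
  also have "\<dots> = (\<Sum>S\<in>?D. x ^ card S)"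
  proof (rule sum.reindex_bij_betw)
    show "bij_betw (Sigma I) ?P ?D"
      by (rule bij_betw_byWitness[where f' = "\<lambda>S. restrict (\<lambda>i. {a. (i, a) \<in> S}) I"])
        (fastforce simp: PiE_def Pi_def extensional_def restrict_def fun_eq_iff)+
  qed
  finally show ?thesis ..
qed

lemma domination_poly_eq_sum_dominating:
  assumes "finite (verts G)" and "verts G \<noteq> {}"
  shows "domination_poly G = (\<Sum>S\<in>{S. dominating G S}. [:0, 1:] ^ card S)"
proof -
  let ?D = "{S. dominating G S}"
  have "?D \<subseteq> Pow (verts G)"
    by (auto simp: dominating_def)
  then have finite: "finite ?D"
    using assms(1) by (simp add: finite_subset)
  have "card S \<in> {1..card (verts G)}" if "dominating G S" for S
  proof -
    have "S \<subseteq> verts G" and "S \<noteq> {}"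
      using that assms(2) by (auto simp: dominating_def)
    then show ?thesis
      using assms(1) by (auto simp: Suc_le_eq card_gt_0_iff card_mono finite_subset)
  qed
  then have "(\<Sum>S\<in>?D. [:0, 1:] ^ card S)
      = (\<Sum>i = 1..card (verts G). \<Sum>S\<in>{S\<in>?D. card S = i}. [:0, 1:] ^ card S)"
    using finite by (intro sum.group[symmetric]) auto
  also have "\<dots> = domination_poly G"
    unfolding domination_poly_def dom_count_def
    by (intro sum.cong refl) (simp add: monom_altdef of_nat_mult_conv_smult)
  finally show ?thesis ..
qed

lemma verts_gs_graph: "verts (gs_graph k n F) = Sigma {..<k} (\<lambda>i. {..<n i})"
  by (auto simp: gs_graph_def verts_def)

lemma gs_graph_neighbour_of_private_vertex:
  assumes "\<forall>i. Suc i < k \<longrightarrow> F i \<subseteq> {0..<n i - 1} \<times> {0..<n (Suc i) - 1}"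
    and "{u, (i, n i - 1)} \<in> edges (gs_graph k n F)"
  shows "fst u = i"
  using assms(2) unfolding gs_graph_def edges_def snd_conv
proof (elim UnE CollectE exE conjE)
  fix j a b assume "{u, (i, n i - 1)} = {(j, a), (j, b)}"
  then show "fst u = i" by (auto simp: doubleton_eq_iff)
next
  fix j a b assume e: "{u, (i, n i - 1)} = {(j, a), (Suc j, b)}"
    and "Suc j < k" and "(a, b) \<in> F j"
  then have "a < n j - 1" "b < n (Suc j) - 1"
    using assms(1) by (auto dest!: spec[of _ j])
  with e show "fst u = i" by (auto simp: doubleton_eq_iff)
qed

lemma dominating_gs_graph_iff:
  assumes "\<forall>i. Suc i < k \<longrightarrow> F i \<subseteq> {0..<n i - 1} \<times> {0..<n (Suc i) - 1}"
    and "\<forall>i<k. n i > 0"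
  shows "dominating (gs_graph k n F) S \<longleftrightarrow>
           S \<subseteq> Sigma {..<k} (\<lambda>i. {..<n i}) \<and> (\<forall>i\<in>{..<k}. \<exists>a. (i, a) \<in> S)"
proof
  assume dom: "dominating (gs_graph k n F) S"
  have "\<exists>a. (i, a) \<in> S" if "i < k" for i
  proof (rule ccontr)
    assume none: "\<nexists>a. (i, a) \<in> S"
    then have "(i, n i - 1) \<in> verts (gs_graph k n F) - S"
      using that assms(2) by (auto simp: verts_gs_graph)
    then obtain u where "u \<in> S" and "{u, (i, n i - 1)} \<in> edges (gs_graph k n F)"
      using dom unfolding dominating_def by blast
    with none gs_graph_neighbour_of_private_vertex[OF assms(1)] show False
      by (metis prod.collapse)
  qed
  with dom show "S \<subseteq> Sigma {..<k} (\<lambda>i. {..<n i}) \<and> (\<forall>i\<in>{..<k}. \<exists>a. (i, a) \<in> S)"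
    by (auto simp: dominating_def verts_gs_graph)
next
  assume S: "S \<subseteq> Sigma {..<k} (\<lambda>i. {..<n i}) \<and> (\<forall>i\<in>{..<k}. \<exists>a. (i, a) \<in> S)"
  have "\<exists>u\<in>S. {u, (i, b)} \<in> edges (gs_graph k n F)"
    if "i < k" "b < n i" "(i, b) \<notin> S" for i b
  proof -
    obtain a where a: "(i, a) \<in> S"
      using S \<open>i < k\<close> by blast
    with S that have "{(i, a), (i, b)} \<in> edges (gs_graph k n F)"
      by (auto simp: gs_graph_def edges_def)
    with a show ?thesis by blast
  qed
  with S show "dominating (gs_graph k n F) S"
    by (auto simp: dominating_def verts_gs_graph)
qed

theorem mainTheorem8:
  fixes k t :: nat and n :: "nat \<Rightarrow> nat" and H :: "(nat \<times> nat) graph"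
  assumes "k \<ge> 2"
    and "\<forall>i < k. n i \<ge> 3"
    and "t \<ge> 1"
    and "\<forall>i. Suc i < k \<longrightarrow> t \<le> (n i - 1) * (n (Suc i) - 1)"
    and "in_GS t k n H"
  shows "domination_poly H = (\<Prod>i<k. [:1, 1:] ^ n i - 1)"
proof -
  obtain F where F: "\<forall>i. Suc i < k \<longrightarrow> F i \<subseteq> {0..<n i - 1} \<times> {0..<n (Suc i) - 1}"
    and H: "H = gs_graph k n F"
    using assms(5) unfolding in_GS_def by blast
  have pos: "\<forall>i<k. n i > 0"
    using assms(2) by (auto intro: less_le_trans[of 0 3])
  with assms(1) have "(0, 0) \<in> verts H"
    by (simp add: H verts_gs_graph)
  then have "domination_poly H = (\<Sum>S\<in>{S. dominating H S}. [:0, 1:] ^ card S)"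
    by (intro domination_poly_eq_sum_dominating) (auto simp: H verts_gs_graph)
  also have "\<dots> = (\<Sum>S\<in>{S. S \<subseteq> Sigma {..<k} (\<lambda>i. {..<n i}) \<and> (\<forall>i\<in>{..<k}. \<exists>a. (i, a) \<in> S)}.
                     [:0, 1:] ^ card S)"
    using pos by (simp add: H dominating_gs_graph_iff[OF F])
  also have "\<dots> = (\<Prod>i<k. (1 + [:0, 1:]) ^ card {..<n i} - 1)"
    by (rule sum_pow_card_subsets_meeting_every_fibre) auto
  finally show ?thesis
    by (simp add: one_pCons)
qed

end
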